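(* Let $G$ be a connected simple graph with $n$ vertices and $n+1$ edges belonging to the class $\mathcal{A}(p,q,l)$ for some $p,q,l$. Then $\operatorname{avm}(G)\ge \operatorname{avm}(\theta_n^1(3,3))$, with equality if and only if $G\cong \theta_n^1(3,3)$.
   Context: For a finite simple graph $G$, $\operatorname{avm}(G)$ is the average of $|M|$ over all maximal matchings $M$ of $G$ (a matching is maximal if it is not properly contained in another matching). A connected graph with $n$ vertices and $n+1$ edges contains two induced cycles $C_p$ and $C_q$ (of lengths $p$ and $q$); it belongs to $\mathcal{A}(p,q,l)$ if these cycles have a common path of length $l\ge 1$ (so the union of the cycles is a theta graph). $\theta_n^1(3,3)$ is the graph obtained from two triangles sharing an edge $uv$ (vertices $u,v,x,y$, edges $uv,ux,uy,vx,vy$) by attaching $n-4$ pendant edges (new leaves) to $u$. *)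

theory Defs
  imports Complex_Main
begin

definition simple_graph :: "'a set \<Rightarrow> 'a set set \<Rightarrow> bool" where
  "simple_graph V E \<longleftrightarrow> finite V \<and> (\<forall>e\<in>E. card e = 2 \<and> e \<subseteq> V)"

definition graph_connected :: "'a set \<Rightarrow> 'a set set \<Rightarrow> bool" where
  "graph_connected V E \<longleftrightarrow>
     (\<forall>u\<in>V. \<forall>v\<in>V. (u, v) \<in> {(x, y). {x, y} \<in> E}\<^sup>*)"

definition matching :: "'a set set \<Rightarrow> 'a set set \<Rightarrow> bool" where
  "matching E M \<longleftrightarrow> M \<subseteq> E \<and> (\<forall>e1\<in>M. \<forall>e2\<in>M. e1 \<noteq> e2 \<longrightarrow> e1 \<inter> e2 = {})"

definition maximal_matching :: "'a set set \<Rightarrow> 'a set set \<Rightarrow> bool" where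
  "maximal_matching E M \<longleftrightarrow> matching E M \<and> (\<forall>M'. matching E M' \<and> M \<subseteq> M' \<longrightarrow> M' = M)"

definition avm :: "'a set set \<Rightarrow> real" where
  "avm E = (\<Sum>M\<in>{M. maximal_matching E M}. real (card M)) / real (card {M. maximal_matching E M})"

definition induced_edges :: "'a set set \<Rightarrow> 'a set \<Rightarrow> 'a set set" where
  "induced_edges E S = {e\<in>E. e \<subseteq> S}"

definition is_cycle :: "'a set \<Rightarrow> 'a set set \<Rightarrow> nat \<Rightarrow> bool" where
  "is_cycle S F k \<longleftrightarrow> k \<ge> 3 \<and> (\<exists>vs. distinct vs \<and> length vs = k \<and> set vs = S \<and>
      F = {{vs ! i, vs ! ((i + 1) mod k)} | i. i < k})"

definition is_path :: "'a set \<Rightarrow> 'a set set \<Rightarrow> nat \<Rightarrow> bool" where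
  "is_path S F l \<longleftrightarrow> (\<exists>vs. distinct vs \<and> length vs = l + 1 \<and> set vs = S \<and>
      F = {{vs ! i, vs ! (i + 1)} | i. i < l})"

definition induced_cycle :: "'a set \<Rightarrow> 'a set set \<Rightarrow> 'a set \<Rightarrow> nat \<Rightarrow> bool" where
  "induced_cycle V E S k \<longleftrightarrow> S \<subseteq> V \<and> is_cycle S (induced_edges E S) k"

text \<open>Class A(p,q,l): two induced cycles C_p, C_q whose common part is a path of
  length l \<ge> 1 (the intersection of the edge sets of two induced cycles is the set of
  edges induced on the intersection of their vertex sets).\<close>
definition class_A :: "'a set \<Rightarrow> 'a set set \<Rightarrow> nat \<Rightarrow> nat \<Rightarrow> nat \<Rightarrow> bool" where
  "class_A V E p q l \<longleftrightarrow> l \<ge> 1 \<and> (\<exists>S1 S2. induced_cycle V E S1 p \<and> induced_cycle V E S2 q \<and>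
      is_path (S1 \<inter> S2) (induced_edges E (S1 \<inter> S2)) l)"

text \<open>theta_n^1(3,3) on vertices {0..<n}: u=0, v=1, x=2, y=3, leaves 4..n-1 attached to u.\<close>
definition theta_V :: "nat \<Rightarrow> nat set" where
  "theta_V n = {0..<n}"

definition theta_E :: "nat \<Rightarrow> nat set set" where
  "theta_E n = {{0,1},{0,2},{0,3},{1,2},{1,3}} \<union> {{0, i} | i. 4 \<le> i \<and> i < n}"

definition graph_iso :: "'a set \<Rightarrow> 'a set set \<Rightarrow> 'b set \<Rightarrow> 'b set set \<Rightarrow> bool" where
  "graph_iso V E V' E' \<longleftrightarrow> (\<exists>f. bij_betw f V V' \<and> (\<forall>e. e \<subseteq> V \<longrightarrow> (e \<in> E \<longleftrightarrow> f ` e \<in> E')))"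

end

theory Submission
  imports Defs
begin

text \<open>
  If no edge of \<open>G\<close> meets all the others, every maximal matching has at least two edges,
  so \<open>avm(G) \<ge> 2 > avm(\<theta>\<^sub>n\<^sup>1(3,3))\<close>. Otherwise some edge \<open>ab\<close> is dominating and \<open>G\<close> consists
  of \<open>ab\<close>, the edges from \<open>a\<close> to a set \<open>A\<close> and those from \<open>b\<close> to a set \<open>B\<close>; counting the
  \<open>n + 1\<close> edges and \<open>n\<close> vertices of the connected graph gives \<open>|A| + |B| = n\<close> and
  \<open>|A \<inter> B| = 2\<close>. The maximal matchings are \<open>{ab}\<close> and the pairs \<open>{ax, by}\<close> with \<open>x \<noteq> y\<close>,
  so \<open>avm(G) = 2 - 1/(|A||B| - 1)\<close>, and \<open>|A||B| - 1 = (2n - 5) + (|A| - 2)(|B| - 2)\<close> is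
  minimal exactly when \<open>|A| = 2\<close> or \<open>|B| = 2\<close>, i.e. when \<open>G \<cong> \<theta>\<^sub>n\<^sup>1(3,3)\<close>.
\<close>

lemma matching_edges_eq:
  "matching E M \<Longrightarrow> e1 \<in> M \<Longrightarrow> e2 \<in> M \<Longrightarrow> e1 \<inter> e2 \<noteq> {} \<Longrightarrow> e1 = e2"
  unfolding matching_def by blast

lemma matching_singleton: "e \<in> E \<Longrightarrow> matching E {e}"
  unfolding matching_def by blast

lemma matching_doubleton: "e1 \<in> E \<Longrightarrow> e2 \<in> E \<Longrightarrow> e1 \<inter> e2 = {} \<Longrightarrow> matching E {e1, e2}"
  unfolding matching_def by blast

lemma matching_insert:
  assumes "matching E M" "e \<in> E" "\<forall>e'\<in>M. e \<inter> e' = {}"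
  shows "matching E (insert e M)"
  unfolding matching_def
proof (intro conjI ballI impI)
  show "insert e M \<subseteq> E" using assms(1,2) unfolding matching_def by blast
next
  fix e1 e2 assume "e1 \<in> insert e M" "e2 \<in> insert e M" "e1 \<noteq> e2"
  then consider "e1 = e" "e2 \<in> M" | "e2 = e" "e1 \<in> M" | "e1 \<in> M" "e2 \<in> M" by blast
  then show "e1 \<inter> e2 = {}"
  proof cases
    case 3
    then show ?thesis using assms(1) \<open>e1 \<noteq> e2\<close> unfolding matching_def by blast
  qed (use assms(3) in \<open>auto simp: Int_commute\<close>)
qed

lemma maximal_matching_iff:
  assumes "{} \<notin> E"
  shows "maximal_matching E M \<longleftrightarrow> matching E M \<and> (\<forall>e\<in>E. \<exists>e'\<in>M. e \<inter> e' \<noteq> {})"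
proof
  assume max: "maximal_matching E M"
  then have mM: "matching E M" unfolding maximal_matching_def by blast
  have "\<exists>e'\<in>M. e \<inter> e' \<noteq> {}" if e: "e \<in> E" for e
  proof (rule ccontr)
    assume "\<not> (\<exists>e'\<in>M. e \<inter> e' \<noteq> {})"
    then have free: "\<forall>e'\<in>M. e \<inter> e' = {}" by blast
    have "insert e M = M"
      using max matching_insert[OF mM e free] unfolding maximal_matching_def by blast
    then have "e \<in> M" by blast
    moreover have "e \<inter> e \<noteq> {}" using e assms by auto
    ultimately show False using free by blast
  qed
  with mM show "matching E M \<and> (\<forall>e\<in>E. \<exists>e'\<in>M. e \<inter> e' \<noteq> {})" by blast
next
  assume "matching E M \<and> (\<forall>e\<in>E. \<exists>e'\<in>M. e \<inter> e' \<noteq> {})"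
  then have mM: "matching E M" and cover: "\<forall>e\<in>E. \<exists>e'\<in>M. e \<inter> e' \<noteq> {}" by blast+
  have "M' \<subseteq> M" if M': "matching E M'" and "M \<subseteq> M'" for M'
  proof
    fix e assume e: "e \<in> M'"
    then have "e \<in> E" using M' unfolding matching_def by blast
    then obtain e' where "e' \<in> M" "e \<inter> e' \<noteq> {}" using cover by blast
    then have "e = e'" using matching_edges_eq[OF M' e] \<open>M \<subseteq> M'\<close> by blast
    then show "e \<in> M" using \<open>e' \<in> M\<close> by simp
  qed
  then show "maximal_matching E M" using mM unfolding maximal_matching_def by blast
qed

lemma maximal_matching_exists:
  assumes "finite E"
  obtains M where "maximal_matching E M"
proof -
  have "finite {M. matching E M}"
    by (rule finite_subset[of _ "Pow E"]) (use assms in \<open>auto simp: matching_def\<close>)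
  moreover have "{} \<in> {M. matching E M}" unfolding matching_def by blast
  ultimately obtain M where "M \<in> {M. matching E M}" "\<forall>M'\<in>{M. matching E M}. M \<subseteq> M' \<longrightarrow> M = M'"
    using finite_has_maximal by blast
  then show ?thesis using that unfolding maximal_matching_def by blast
qed

lemma avm_lower_bound:
  assumes "finite E" and "\<And>M. maximal_matching E M \<Longrightarrow> c \<le> real (card M)"
  shows "c \<le> avm E"
proof -
  let ?S = "{M. maximal_matching E M}"
  have "finite ?S"
    by (rule finite_subset[of _ "Pow E"])
      (use assms(1) in \<open>auto simp: maximal_matching_def matching_def\<close>)
  moreover have "?S \<noteq> {}" using maximal_matching_exists[OF assms(1)] by blast
  ultimately have pos: "0 < real (card ?S)" by (simp add: card_gt_0_iff)
  have "(\<Sum>M\<in>?S. c) \<le> (\<Sum>M\<in>?S. real (card M))"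
    by (rule sum_mono) (simp add: assms(2))
  then have "c * real (card ?S) \<le> (\<Sum>M\<in>?S. real (card M))"
    by (simp add: mult.commute)
  then show ?thesis unfolding avm_def by (simp only: pos_le_divide_eq[OF pos])
qed

definition dominating_edge :: "'a set set \<Rightarrow> 'a set \<Rightarrow> bool" where
  "dominating_edge E e \<longleftrightarrow> e \<in> E \<and> (\<forall>e'\<in>E. e' \<inter> e \<noteq> {})"

lemma card_maximal_matching_ge_2:
  assumes "finite E" "{} \<notin> E" "E \<noteq> {}" "\<nexists>e. dominating_edge E e"
    and max: "maximal_matching E M"
  shows "2 \<le> card M"
proof -
  have mM: "matching E M" and cover: "\<forall>e\<in>E. \<exists>e'\<in>M. e \<inter> e' \<noteq> {}"
    using max maximal_matching_iff[OF assms(2)] by blast+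
  then have "finite M" using assms(1) finite_subset unfolding matching_def by blast
  moreover have "M \<noteq> {}" using cover assms(3) by blast
  ultimately have "card M \<noteq> 0" by simp
  moreover have "card M \<noteq> 1"
  proof
    assume "card M = 1"
    then obtain e where "M = {e}" by (rule card_1_singletonE)
    then have "dominating_edge E e"
      using mM cover unfolding dominating_edge_def matching_def by blast
    then show False using assms(4) by blast
  qed
  ultimately show ?thesis by linarith
qed

text \<open>\<open>A\<close> and \<open>B\<close> may overlap: each common neighbour of \<open>a\<close> and \<open>b\<close> closes a triangle.\<close>
definition double_star :: "'a \<Rightarrow> 'a \<Rightarrow> 'a set \<Rightarrow> 'a set \<Rightarrow> 'a set set" where
  "double_star a b A B = insert {a, b} ((\<lambda>w. {a, w}) ` A \<union> (\<lambda>w. {b, w}) ` B)"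

lemma double_star_commute: "double_star a b A B = double_star b a B A"
  unfolding double_star_def by (auto simp: insert_commute)

lemma double_star_edgeE:
  assumes "e \<in> double_star a b A B"
  obtains "e = {a, b}" | x where "x \<in> A" "e = {a, x}" | y where "y \<in> B" "e = {b, y}"
  using assms unfolding double_star_def by blast

lemma double_star_edge_meets_centre: "e \<in> double_star a b A B \<Longrightarrow> a \<in> e \<or> b \<in> e"
  by (erule double_star_edgeE) auto

lemma double_star_edge_at_first_centre:
  assumes "e \<in> double_star a b A B" "a \<in> e" "b \<notin> e" "a \<notin> B"
  shows "\<exists>x\<in>A. e = {a, x}"
  using assms by (cases rule: double_star_edgeE) auto

lemma double_star_edge_at_both_centres:
  assumes "e \<in> double_star a b A B" "a \<in> e" "b \<in> e" "a \<noteq> b" "b \<notin> A" "a \<notin> B"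
  shows "e = {a, b}"
  using assms by (cases rule: double_star_edgeE) auto

lemma Union_double_star: "\<Union>(double_star a b A B) = insert a (insert b (A \<union> B))"
  unfolding double_star_def by auto

lemma card_double_star:
  assumes "a \<noteq> b" "finite A" "finite B" "a \<notin> A" "b \<notin> A" "a \<notin> B" "b \<notin> B"
  shows "card (double_star a b A B) = card A + card B + 1"
proof -
  have "inj_on (\<lambda>w. {a, w}) A" "inj_on (\<lambda>w. {b, w}) B"
    by (auto intro!: inj_onI simp: doubleton_eq_iff)
  moreover have "(\<lambda>w. {a, w}) ` A \<inter> (\<lambda>w. {b, w}) ` B = {}"
    using assms by (auto simp: doubleton_eq_iff)
  moreover have "{a, b} \<notin> (\<lambda>w. {a, w}) ` A \<union> (\<lambda>w. {b, w}) ` B"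
    using assms by (auto simp: doubleton_eq_iff)
  ultimately show ?thesis
    using assms(2,3) by (simp add: double_star_def card_Un_disjoint card_image)
qed

lemma double_star_centre_covered:
  assumes "a \<notin> A" "b \<notin> A" "2 \<le> card A" and max: "maximal_matching (double_star a b A B) M"
  shows "\<exists>e\<in>M. a \<in> e"
proof (rule ccontr)
  let ?E = "double_star a b A B"
  assume uncovered: "\<not> (\<exists>e\<in>M. a \<in> e)"
  have "{} \<notin> ?E" by (auto simp: double_star_def)
  then have mM: "matching ?E M" and cover: "\<forall>e\<in>?E. \<exists>e'\<in>M. e \<inter> e' \<noteq> {}"
    using max maximal_matching_iff by blast+
  have b_edge: "\<exists>y. e = {b, y}" if "e \<in> M" for e
  proof -
    have "e \<in> ?E" using that mM unfolding matching_def by blast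
    then show ?thesis using that uncovered by (cases rule: double_star_edgeE) auto
  qed
  obtain x where x: "x \<in> A" "\<forall>e\<in>M. x \<notin> e"
  proof (cases "M = {}")
    case True
    then show ?thesis using that \<open>2 \<le> card A\<close> by fastforce
  next
    case False
    then obtain e0 where e0: "e0 \<in> M" by blast
    then obtain y where y: "e0 = {b, y}" using b_edge by blast
    have "M \<subseteq> {e0}"
    proof
      fix e assume e: "e \<in> M"
      then obtain w where "e = {b, w}" using b_edge by blast
      then show "e \<in> {e0}" using matching_edges_eq[OF mM e e0] y by blast
    qed
    have "\<not> A \<subseteq> {y}"
      using card_mono[of "{y}" A] \<open>2 \<le> card A\<close> by auto
    then obtain x where "x \<in> A" "x \<noteq> y" by blast
    then show ?thesis using that \<open>M \<subseteq> {e0}\<close> y assms(2) by blast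
  qed
  have "{a, x} \<in> ?E" using x(1) unfolding double_star_def by blast
  then obtain e' where "e' \<in> M" "{a, x} \<inter> e' \<noteq> {}" using cover by blast
  then show False using uncovered x(2) by blast
qed

lemma maximal_matchings_double_star:
  assumes "a \<noteq> b" "a \<notin> A" "b \<notin> A" "a \<notin> B" "b \<notin> B" "2 \<le> card A" "2 \<le> card B"
  shows "{M. maximal_matching (double_star a b A B) M}
    = insert {{a, b}} ((\<lambda>(x, y). {{a, x}, {b, y}}) ` (A \<times> B - Id))"
    (is "?S = ?R")
proof (intro equalityI subsetI)
  let ?E = "double_star a b A B"
  fix M assume "M \<in> ?S"
  then have max: "maximal_matching ?E M" by blast
  then have mM: "matching ?E M" unfolding maximal_matching_def by blast
  then have ME: "M \<subseteq> ?E" unfolding matching_def by blast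
  obtain ea where ea: "ea \<in> M" "a \<in> ea"
    using double_star_centre_covered[OF assms(2,3,6) max] by blast
  have "maximal_matching (double_star b a B A) M"
    using max double_star_commute[of a b A B] by simp
  then have "\<exists>e\<in>M. b \<in> e" by (rule double_star_centre_covered[OF assms(5,4,7)])
  then obtain eb where eb: "eb \<in> M" "b \<in> eb" by blast
  have M: "M \<subseteq> {ea, eb}"
  proof
    fix e assume e: "e \<in> M"
    then have "a \<in> e \<or> b \<in> e" using ME by (intro double_star_edge_meets_centre) blast
    then show "e \<in> {ea, eb}"
      using matching_edges_eq[OF mM e ea(1)] matching_edges_eq[OF mM e eb(1)] ea(2) eb(2)
      by blast
  qed
  have "{ea, eb} \<subseteq> M" using ea eb by blast
  with M have M_eq: "M = {ea, eb}" by (rule subset_antisym)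
  show "M \<in> ?R"
  proof (cases "ea = eb")
    case True
    have "ea \<in> ?E" "b \<in> ea" using ea ME eb True by blast+
    then have "ea = {a, b}"
      by (rule double_star_edge_at_both_centres[OF _ ea(2) _ assms(1,3,4)])
    then show ?thesis using M_eq True by simp
  next
    case False
    then have disj: "ea \<inter> eb = {}" using matching_edges_eq[OF mM ea(1) eb(1)] by blast
    have "ea \<in> ?E" "b \<notin> ea" using ea eb ME disj by blast+
    then obtain x where x: "x \<in> A" "ea = {a, x}"
      using double_star_edge_at_first_centre[OF _ ea(2) _ assms(4)] by blast
    have "eb \<in> double_star b a B A" "a \<notin> eb"
      using ea eb ME disj unfolding double_star_commute[of a b A B] by blast+
    then obtain y where y: "y \<in> B" "eb = {b, y}"
      using double_star_edge_at_first_centre[OF _ eb(2) _ assms(3)] by blast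
    have "x \<noteq> y" using disj x(2) y(2) by auto
    then have "(x, y) \<in> A \<times> B - Id" using x(1) y(1) by simp
    moreover have "M = (\<lambda>(x, y). {{a, x}, {b, y}}) (x, y)" using M_eq x(2) y(2) by simp
    ultimately show ?thesis by (intro insertI2 image_eqI)
  qed
next
  let ?E = "double_star a b A B"
  have nonempty: "{} \<notin> ?E" by (auto simp: double_star_def)
  fix M assume "M \<in> ?R"
  then consider "M = {{a, b}}" | p where "p \<in> A \<times> B - Id" "M = (\<lambda>(x, y). {{a, x}, {b, y}}) p"
    by (elim insertE imageE) blast+
  then have "matching ?E M \<and> (\<forall>e\<in>?E. \<exists>e'\<in>M. e \<inter> e' \<noteq> {})"
  proof cases
    case 1
    have "{a, b} \<in> ?E" by (simp add: double_star_def)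
    moreover have "\<exists>e'\<in>{{a, b}}. e \<inter> e' \<noteq> {}" if "e \<in> ?E" for e
      using double_star_edge_meets_centre[OF that] by auto
    ultimately show ?thesis unfolding 1 using matching_singleton by blast
  next
    case (2 p)
    obtain x y where p: "p = (x, y)" by (cases p)
    have xy: "x \<in> A" "y \<in> B" "x \<noteq> y" and M: "M = {{a, x}, {b, y}}" using 2 p by auto
    have "{a, x} \<in> ?E" "{b, y} \<in> ?E" using xy by (simp_all add: double_star_def)
    moreover have "{a, x} \<inter> {b, y} = {}" using xy assms(1-5) by auto
    moreover have "\<exists>e'\<in>{{a, x}, {b, y}}. e \<inter> e' \<noteq> {}" if "e \<in> ?E" for e
      using double_star_edge_meets_centre[OF that] by auto
    ultimately show ?thesis unfolding M using matching_doubleton by blast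
  qed
  then show "M \<in> ?S" using maximal_matching_iff[OF nonempty] by blast
qed

lemma card_Times_Diff_Id:
  assumes "finite A" "finite B"
  shows "card (A \<times> B - Id) = card A * card B - card (A \<inter> B)"
proof -
  have "A \<times> B \<inter> Id = (\<lambda>x. (x, x)) ` (A \<inter> B)" by auto
  then have "card (A \<times> B \<inter> Id) = card (A \<inter> B)" by (simp add: card_image inj_on_def)
  then show ?thesis using assms by (simp add: card_Diff_subset_Int card_cartesian_product)
qed

lemma avm_double_star:
  assumes "a \<noteq> b" "a \<notin> A" "b \<notin> A" "a \<notin> B" "b \<notin> B" "2 \<le> card A" "2 \<le> card B"
  shows "avm (double_star a b A B) = 2 - 1 / (real (card (A \<times> B - Id)) + 1)"
proof -
  define P where "P = A \<times> B - Id"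
  define h where "h = (\<lambda>(x, y). {{a, x}, {b, y}})"
  have S: "{M. maximal_matching (double_star a b A B) M} = insert {{a, b}} (h ` P)"
    using maximal_matchings_double_star[OF assms] unfolding P_def h_def .
  have "finite A" "finite B" using assms(6,7) by (auto intro: card_ge_0_finite)
  then have finP: "finite P" unfolding P_def by blast
  have a_notin: "a \<notin> {b, y}" if "y \<in> B" for y
    using that assms(1,4) by auto
  have b_notin: "b \<notin> {a, x}" if "x \<in> A" for x
    using that assms(1,3) by auto
  have inj: "inj_on h P"
  proof (rule inj_onI)
    fix p q assume "p \<in> P" "q \<in> P" and eq: "h p = h q"
    obtain x y x' y' where p: "p = (x, y)" and q: "q = (x', y')" by fastforce
    have xy: "x \<in> A" "y \<in> B" "x' \<in> A" "y' \<in> B"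
      using \<open>p \<in> P\<close> \<open>q \<in> P\<close> unfolding p q P_def by simp_all
    have E: "{{a, x}, {b, y}} = {{a, x'}, {b, y'}}" using eq unfolding p q h_def by simp
    have "{a, x} \<in> {{a, x}, {b, y}}" "{b, y} \<in> {{a, x}, {b, y}}" by simp_all
    then have "{a, x} \<in> {{a, x'}, {b, y'}}" "{b, y} \<in> {{a, x'}, {b, y'}}" unfolding E .
    moreover have "{a, x} \<noteq> {b, y'}" using a_notin[OF xy(4)] by blast
    moreover have "{b, y} \<noteq> {a, x'}" using b_notin[OF xy(3)] by blast
    ultimately have "{a, x} = {a, x'}" "{b, y} = {b, y'}" by blast+
    then show "p = q" unfolding p q by (auto simp: doubleton_eq_iff)
  qed
  have new: "{{a, b}} \<noteq> h p" if pP: "p \<in> P" for p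
  proof
    obtain x y where p: "p = (x, y)" "y \<in> B" using pP unfolding P_def by (cases p) auto
    assume eq: "{{a, b}} = h p"
    have "{b, y} \<in> {{a, b}}" unfolding eq p h_def by simp
    then show False using a_notin[OF p(2)] by auto
  qed
  then have "{{a, b}} \<notin> h ` P" by (simp add: image_iff)
  have two: "card (h p) = 2" if pP: "p \<in> P" for p
  proof -
    obtain x y where p: "p = (x, y)" "y \<in> B" using pP unfolding P_def by (cases p) auto
    then have "{a, x} \<noteq> {b, y}" using a_notin by blast
    then show ?thesis unfolding p h_def by simp
  qed
  have "(\<Sum>M\<in>h ` P. real (card M)) = (\<Sum>p\<in>P. real (card (h p)))"
    by (rule sum.reindex[OF inj, unfolded comp_def])
  also have "\<dots> = 2 * real (card P)" using two by simp
  finally have "avm (double_star a b A B) = (1 + 2 * real (card P)) / (1 + real (card P))"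
    unfolding avm_def S using \<open>{{a, b}} \<notin> h ` P\<close> finP inj by (simp add: card_image)
  then show ?thesis unfolding P_def[symmetric] by (simp add: field_simps)
qed

lemma matching_image:
  assumes inj: "inj_on f (\<Union>E)" and "M \<subseteq> E"
  shows "matching ((`) f ` E) ((`) f ` M) \<longleftrightarrow> matching E M"
proof -
  have image_Int: "f ` e1 \<inter> f ` e2 = f ` (e1 \<inter> e2)" if "e1 \<in> E" "e2 \<in> E" for e1 e2
    using inj_on_image_Int[OF inj] that by blast
  have image_eq: "f ` e1 = f ` e2 \<longleftrightarrow> e1 = e2" if "e1 \<in> E" "e2 \<in> E" for e1 e2
    using inj_on_image_eq_iff[OF inj] that by blast
  have "(\<forall>e1\<in>M. \<forall>e2\<in>M. e1 \<noteq> e2 \<longrightarrow> e1 \<inter> e2 = {})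
    \<longleftrightarrow> (\<forall>e1\<in>M. \<forall>e2\<in>M. f ` e1 \<noteq> f ` e2 \<longrightarrow> f ` e1 \<inter> f ` e2 = {})"
    using assms(2) image_Int image_eq by (auto simp: subset_iff)
  then show ?thesis
    unfolding matching_def using assms(2) by (simp add: image_mono)
qed

lemma maximal_matching_image:
  assumes inj: "inj_on f (\<Union>E)" and "{} \<notin> E" and "M \<subseteq> E"
  shows "maximal_matching ((`) f ` E) ((`) f ` M) \<longleftrightarrow> maximal_matching E M"
proof -
  have "{} \<notin> (`) f ` E" using assms(2) by auto
  moreover have "f ` e \<inter> f ` e' = f ` (e \<inter> e')" if "e \<in> E" "e' \<in> E" for e e'
    using inj_on_image_Int[OF inj] that by blast
  ultimately show ?thesis
    using maximal_matching_iff[OF assms(2)] matching_image[OF assms(1,3)] assms(3)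
    by (auto simp: maximal_matching_iff subset_iff)
qed

lemma avm_image:
  assumes inj: "inj_on f (\<Union>E)" and "{} \<notin> E"
  shows "avm ((`) f ` E) = avm E"
proof -
  let ?h = "(`) f" and ?S = "{M. maximal_matching E M}"
  have inj_h: "inj_on ?h E"
    using inj_on_image_Pow[OF inj] by (rule inj_on_subset) blast
  have inj_hh: "inj_on ((`) ?h) (Pow E)"
    using inj_on_image_Pow[OF inj_h] .
  have S_sub: "?S \<subseteq> Pow E" unfolding maximal_matching_def matching_def by blast
  have "{M'. maximal_matching (?h ` E) M'} = (`) ?h ` ?S"
  proof (intro equalityI subsetI)
    fix M' assume "M' \<in> {M'. maximal_matching (?h ` E) M'}"
    then have max: "maximal_matching (?h ` E) M'" by blast
    define M where "M = {e \<in> E. f ` e \<in> M'}"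
    have "M' \<subseteq> ?h ` E" using max unfolding maximal_matching_def matching_def by blast
    then have M': "M' = ?h ` M" unfolding M_def by blast
    have "M \<subseteq> E" unfolding M_def by blast
    then have "maximal_matching E M"
      using max maximal_matching_image[OF assms] unfolding M' by blast
    then show "M' \<in> (`) ?h ` ?S" using M' by blast
  next
    fix M' assume "M' \<in> (`) ?h ` ?S"
    then obtain M where "maximal_matching E M" "M' = ?h ` M" by blast
    moreover have "M \<subseteq> E" using \<open>maximal_matching E M\<close> S_sub by blast
    ultimately show "M' \<in> {M'. maximal_matching (?h ` E) M'}"
      using maximal_matching_image[OF assms] by blast
  qed
  moreover have "card (?h ` M) = card M" if "M \<in> ?S" for M
    using that S_sub inj_h by (auto intro!: card_image elim: inj_on_subset)
  moreover have "inj_on ((`) ?h) ?S" using inj_hh S_sub by (rule inj_on_subset)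
  ultimately show ?thesis
    unfolding avm_def by (simp add: sum.reindex card_image)
qed

lemma avm_graph_iso:
  assumes iso: "graph_iso V E V' E'" and "simple_graph V E" and E'_sub: "\<forall>e\<in>E'. e \<subseteq> V'"
  shows "avm E = avm E'"
proof -
  obtain f where bij: "bij_betw f V V'" and edge_iff: "\<forall>e. e \<subseteq> V \<longrightarrow> (e \<in> E \<longleftrightarrow> f ` e \<in> E')"
    using iso unfolding graph_iso_def by blast
  have E_sub: "\<forall>e\<in>E. e \<subseteq> V" and "{} \<notin> E"
    using \<open>simple_graph V E\<close> unfolding simple_graph_def by auto
  have inj: "inj_on f (\<Union>E)"
    using bij E_sub unfolding bij_betw_def by (meson Sup_le_iff inj_on_subset)
  have "E' = (`) f ` E"
  proof (intro equalityI subsetI)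
    fix e' assume "e' \<in> E'"
    define e where "e = inv_into V f ` e'"
    have "e' \<subseteq> f ` V" using \<open>e' \<in> E'\<close> E'_sub bij by (auto simp: bij_betw_def)
    then have "f ` e = e'" "e \<subseteq> V"
      unfolding e_def by (auto simp: image_inv_into_cancel intro: inv_into_into)
    then show "e' \<in> (`) f ` E" using edge_iff \<open>e' \<in> E'\<close> by auto
  qed (use edge_iff E_sub in auto)
  then show ?thesis using avm_image[OF inj \<open>{} \<notin> E\<close>] by simp
qed

lemma theta_E_eq_double_star:
  assumes "4 \<le> n"
  shows "theta_E n = double_star 0 1 {2..<n} {2, 3}"
proof -
  have "{2..<n} = insert 2 (insert 3 {4..<n})" using assms by auto
  moreover have "{{0, i} | i. 4 \<le> i \<and> i < n} = (\<lambda>w. {0, w}) ` {4..<n}" by auto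
  ultimately show ?thesis unfolding theta_E_def double_star_def by (auto simp: insert_commute)
qed

lemma avm_theta_E:
  assumes "4 \<le> n"
  shows "avm (theta_E n) = 2 - 1 / (2 * real n - 5)"
proof -
  have "card ({2..<n} \<times> {2::nat, 3} - Id) = 2 * n - 6"
    using assms by (simp add: card_Times_Diff_Id Int_absorb1)
  then have "real (card ({2..<n} \<times> {2::nat, 3} - Id)) + 1 = 2 * real n - 5"
    using assms by simp
  moreover have "avm (theta_E n) = 2 - 1 / (real (card ({2..<n} \<times> {2::nat, 3} - Id)) + 1)"
    unfolding theta_E_eq_double_star[OF assms] by (rule avm_double_star) (use assms in auto)
  ultimately show ?thesis by simp
qed

lemma graph_iso_double_star_theta_E:
  assumes "a \<noteq> b" "finite A" "a \<notin> A" "b \<notin> A" "B \<subseteq> A" "card B = 2" "card A + 2 = n"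
  shows "graph_iso (insert a (insert b A)) (double_star a b A B) (theta_V n) (theta_E n)"
proof -
  obtain x y where B: "B = {x, y}" "x \<noteq> y" using \<open>card B = 2\<close> by (meson card_2_iff)
  have "x \<in> A" "y \<in> A" using B \<open>B \<subseteq> A\<close> by auto
  have "4 \<le> n" using assms(2,5,6,7) card_mono[of A B] by simp
  define L where "L = A - {x, y}"
  have "card L = n - 4"
    unfolding L_def using assms(2,7) \<open>x \<in> A\<close> \<open>y \<in> A\<close> B(2) by (simp add: card_Diff_subset)
  moreover have "finite L" unfolding L_def using assms(2) by simp
  ultimately obtain g where g: "bij_betw g L {4..<n}"
    using bij_betw_iff_card[of L "{4..<n}"] by auto
  define f where "f v = (if v = a then 0 else if v = b then 1 else if v = x then 2
    else if v = y then 3 else g v)" for v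
  let ?V = "insert a (insert b A)"
  have f_centres: "f a = 0" "f b = 1" and f_B: "f x = 2" "f y = 3"
    using assms(1,3,4) \<open>x \<in> A\<close> \<open>y \<in> A\<close> B(2) unfolding f_def by auto
  have "f ` L = g ` L" unfolding L_def f_def using assms(3,4) by (intro image_cong) auto
  then have "f ` L = {4..<n}" using g by (simp add: bij_betw_def)
  moreover have "A = insert x (insert y L)" unfolding L_def using \<open>x \<in> A\<close> \<open>y \<in> A\<close> by auto
  ultimately have "f ` A = insert 2 (insert 3 {4..<n})" using f_B by simp
  also have "\<dots> = {2..<n}" using \<open>4 \<le> n\<close> by auto
  finally have f_A: "f ` A = {2..<n}" .
  have "f ` ?V = insert 0 (insert 1 {2..<n})" using f_A f_centres by simp
  also have "\<dots> = {0..<n}" using \<open>4 \<le> n\<close> by auto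
  finally have f_V: "f ` ?V = {0..<n}" .
  have "card ?V = n" using assms(1-4,7) by simp
  then have "inj_on f ?V" using f_V assms(2) by (intro eq_card_imp_inj_on) simp_all
  then have bij: "bij_betw f ?V (theta_V n)" unfolding bij_betw_def theta_V_def using f_V by simp
  have "(`) f ` double_star a b A B = double_star (f a) (f b) (f ` A) (f ` B)"
    unfolding double_star_def by (simp add: image_Un image_image)
  also have "\<dots> = theta_E n"
    unfolding f_centres f_A B image_insert image_empty f_B theta_E_eq_double_star[OF \<open>4 \<le> n\<close>] ..
  finally have images: "(`) f ` double_star a b A B = theta_E n" .
  have "e \<in> double_star a b A B \<longleftrightarrow> f ` e \<in> theta_E n" if "e \<subseteq> ?V" for e
  proof
    assume "f ` e \<in> theta_E n"
    then obtain e' where "e' \<in> double_star a b A B" "f ` e = f ` e'"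
      unfolding images[symmetric] by blast
    moreover have "e' \<subseteq> ?V" using \<open>e' \<in> double_star a b A B\<close> \<open>B \<subseteq> A\<close>
      unfolding double_star_def by auto
    ultimately show "e \<in> double_star a b A B"
      using inj_on_image_eq_iff[OF bij_betw_imp_inj_on[OF bij] that] by auto
  next
    assume "e \<in> double_star a b A B"
    then have "f ` e \<in> (`) f ` double_star a b A B" by (rule imageI)
    then show "f ` e \<in> theta_E n" unfolding images .
  qed
  then show ?thesis unfolding graph_iso_def using bij by blast
qed

lemma card_edges_le_choose_2:
  assumes "simple_graph V E"
  shows "card E \<le> card V choose 2"
proof -
  have "finite V" "E \<subseteq> {e. e \<subseteq> V \<and> card e = 2}"
    using assms unfolding simple_graph_def by blast+
  then show ?thesis using n_subsets[of V 2] card_mono[of "{e. e \<subseteq> V \<and> card e = 2}" E] by simp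
qed

lemma card_vertices_ge_4:
  assumes "simple_graph V E" "card E = card V + 1"
  shows "4 \<le> card V"
proof (rule ccontr)
  assume "\<not> 4 \<le> card V"
  then have "card V \<in> {0, 1, 2, 3}" by auto
  then have "card V choose 2 < card V + 1" by (auto simp: choose_two)
  then show False using card_edges_le_choose_2[OF assms(1)] assms(2) by simp
qed

lemma connected_vertices_covered:
  assumes "graph_connected V E" "2 \<le> card V"
  shows "V \<subseteq> \<Union>E"
proof
  fix v assume "v \<in> V"
  have "\<not> V \<subseteq> {v}" using assms(2) card_mono[of "{v}" V] by auto
  then obtain u where "u \<in> V" "u \<noteq> v" by blast
  then have "(v, u) \<in> {(x, y). {x, y} \<in> E}\<^sup>*"
    using assms(1) \<open>v \<in> V\<close> unfolding graph_connected_def by blast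
  then obtain w where "{v, w} \<in> E"
    using \<open>u \<noteq> v\<close> by (auto elim: converse_rtranclE)
  then show "v \<in> \<Union>E" by blast
qed

lemma card_2_containing:
  assumes "card e = 2" "a \<in> e"
  obtains w where "w \<noteq> a" "e = {a, w}"
proof -
  have "card (e - {a}) = 1" using assms by simp
  then obtain w where w: "e - {a} = {w}" by (rule card_1_singletonE)
  then have "e = {a, w}" using assms(2) by auto
  moreover have "w \<noteq> a" using w by auto
  ultimately show ?thesis using that by blast
qed

lemma dominating_edge_double_star:
  assumes "simple_graph V E" "dominating_edge E {a, b}"
  shows "E = double_star a b {w. {a, w} \<in> E \<and> w \<noteq> b} {w. {b, w} \<in> E \<and> w \<noteq> a}"
    (is "E = ?D")
proof (intro equalityI subsetI)
  fix e assume "e \<in> E"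
  then have "card e = 2" using assms(1) unfolding simple_graph_def by blast
  have "a \<in> e \<or> b \<in> e" using assms(2) \<open>e \<in> E\<close> unfolding dominating_edge_def by blast
  then show "e \<in> ?D"
  proof
    assume "a \<in> e"
    then obtain w where "e = {a, w}" by (rule card_2_containing[OF \<open>card e = 2\<close>])
    then show ?thesis using \<open>e \<in> E\<close> unfolding double_star_def by (cases "w = b") blast+
  next
    assume "b \<in> e"
    then obtain w where "e = {b, w}" by (rule card_2_containing[OF \<open>card e = 2\<close>])
    then show ?thesis using \<open>e \<in> E\<close> unfolding double_star_def
      by (cases "w = a") (simp_all add: insert_commute)
  qed
next
  fix e assume "e \<in> ?D"
  then show "e \<in> E"
    using assms(2) unfolding dominating_edge_def by (cases rule: double_star_edgeE) auto
qed

lemma dominated_bicyclic_double_star: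
  assumes G: "simple_graph V E" "graph_connected V E" "card V = n" "card E = n + 1"
    and "a \<noteq> b" "dominating_edge E {a, b}"
  obtains A B where "E = double_star a b A B" "V = insert a (insert b (A \<union> B))"
    "finite A" "finite B" "a \<notin> A" "b \<notin> A" "a \<notin> B" "b \<notin> B"
    "card A + card B = n" "card (A \<inter> B) = 2"
proof -
  define A where "A = {w. {a, w} \<in> E \<and> w \<noteq> b}"
  define B where "B = {w. {b, w} \<in> E \<and> w \<noteq> a}"
  have E: "E = double_star a b A B"
    unfolding A_def B_def using dominating_edge_double_star[OF G(1) assms(6)] .
  have edges: "finite V" "\<forall>e\<in>E. card e = 2 \<and> e \<subseteq> V" using G(1) unfolding simple_graph_def by blast+
  have "A \<subseteq> V" "B \<subseteq> V" unfolding A_def B_def using edges(2) by blast+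
  then have fin: "finite A" "finite B" by (auto intro: rev_finite_subset[OF edges(1)])
  have out: "a \<notin> A" "b \<notin> A" "a \<notin> B" "b \<notin> B"
    unfolding A_def B_def using edges(2) by auto
  have "card A + card B = n" using card_double_star[OF assms(5) fin out] E G(4) by simp
  have "{a, b} \<in> E" using assms(6) unfolding dominating_edge_def by simp
  then have "{a, b} \<subseteq> V" using edges(2) by blast
  then have "2 \<le> card V" using assms(5) edges(1) card_mono[of V "{a, b}"] by simp
  then have "V \<subseteq> \<Union>E" by (rule connected_vertices_covered[OF G(2)])
  moreover have "\<Union>E \<subseteq> V" using edges(2) by blast
  ultimately have V: "V = insert a (insert b (A \<union> B))" unfolding E Union_double_star by blast
  then have "card (A \<union> B) + 2 = n" using G(3) fin out assms(5) by simp
  then have "card (A \<inter> B) = 2"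
    using card_Un_Int[OF fin] \<open>card A + card B = n\<close> by simp
  then show ?thesis using that E V fin out \<open>card A + card B = n\<close> by blast
qed

lemma avm_dominated_bicyclic:
  assumes G: "simple_graph V E" "graph_connected V E" "card V = n" "card E = n + 1"
    and "a \<noteq> b" "dominating_edge E {a, b}"
  shows "avm (theta_E n) \<le> avm E"
    and "avm E = avm (theta_E n) \<Longrightarrow> graph_iso V E (theta_V n) (theta_E n)"
proof -
  obtain A B where E: "E = double_star a b A B" and V: "V = insert a (insert b (A \<union> B))"
    and fin: "finite A" "finite B" and out: "a \<notin> A" "b \<notin> A" "a \<notin> B" "b \<notin> B"
    and sum: "card A + card B = n" and common: "card (A \<inter> B) = 2"
    using dominated_bicyclic_double_star[OF assms] .
  have "2 \<le> card A" "2 \<le> card B"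
    using common card_mono[OF fin(1), of "A \<inter> B"] card_mono[OF fin(2), of "A \<inter> B"] by auto
  have "4 \<le> n" using card_vertices_ge_4[OF G(1)] G(3,4) by simp
  let ?s = "real (card A)" and ?t = "real (card B)"
  have "4 \<le> card A * card B" using mult_le_mono[OF \<open>2 \<le> card A\<close> \<open>2 \<le> card B\<close>] by simp
  then have "real (card (A \<times> B - Id)) + 1 = ?s * ?t - 1"
    using card_Times_Diff_Id[OF fin] common by (simp add: of_nat_diff)
  then have avm_E: "avm E = 2 - 1 / (?s * ?t - 1)"
    unfolding E using avm_double_star[OF assms(5) out \<open>2 \<le> card A\<close> \<open>2 \<le> card B\<close>] by simp
  have excess: "?s * ?t - 1 = (2 * real n - 5) + (?s - 2) * (?t - 2)"
    using sum by (simp add: algebra_simps flip: of_nat_add)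
  have pos: "0 < 2 * real n - 5" using \<open>4 \<le> n\<close> by simp
  have nonneg: "0 \<le> (?s - 2) * (?t - 2)" using \<open>2 \<le> card A\<close> \<open>2 \<le> card B\<close> by simp
  show "avm (theta_E n) \<le> avm E"
    unfolding avm_E avm_theta_E[OF \<open>4 \<le> n\<close>] excess
    using pos nonneg by (simp add: frac_le)
  assume "avm E = avm (theta_E n)"
  then have "(?s - 2) * (?t - 2) = 0"
    unfolding avm_E avm_theta_E[OF \<open>4 \<le> n\<close>] excess using pos nonneg by simp
  then consider "card B = 2" | "card A = 2" by fastforce
  then show "graph_iso V E (theta_V n) (theta_E n)"
  proof cases
    case 1
    then have "B \<subseteq> A" using common card_subset_eq[OF fin(2), of "A \<inter> B"] by auto
    then show ?thesis unfolding E V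
      using graph_iso_double_star_theta_E[OF assms(5) fin(1) out(1,2)] 1 sum
      by (simp add: Un_absorb2)
  next
    case 2
    then have "A \<subseteq> B" using common card_subset_eq[OF fin(1), of "A \<inter> B"] by auto
    then show ?thesis unfolding E V double_star_commute[of a]
      using graph_iso_double_star_theta_E[OF assms(5)[symmetric] fin(2) out(4,3)] 2 sum
      by (simp add: Un_absorb1 insert_commute)
  qed
qed

theorem theorem2p1:
  fixes V :: "'a set" and E :: "'a set set" and n :: nat
  assumes "simple_graph V E"
    and "graph_connected V E"
    and "card V = n"
    and "card E = n + 1"
    and "\<exists>p q l. class_A V E p q l"
  shows "avm E \<ge> avm (theta_E n)
    \<and> (avm E = avm (theta_E n) \<longleftrightarrow> graph_iso V E (theta_V n) (theta_E n))"
proof -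
  have "4 \<le> n" using card_vertices_ge_4[OF assms(1)] assms(3,4) by simp
  have "\<forall>e\<in>theta_E n. e \<subseteq> theta_V n"
    using \<open>4 \<le> n\<close> unfolding theta_E_def theta_V_def by auto
  then have iso_avm: "graph_iso V E (theta_V n) (theta_E n) \<Longrightarrow> avm E = avm (theta_E n)"
    using avm_graph_iso assms(1) by blast
  have "avm (theta_E n) \<le> avm E
    \<and> (avm E = avm (theta_E n) \<longrightarrow> graph_iso V E (theta_V n) (theta_E n))"
  proof (cases "\<exists>e. dominating_edge E e")
    case True
    then obtain e where e: "dominating_edge E e" by blast
    then have "card e = 2" using assms(1) unfolding simple_graph_def dominating_edge_def by blast
    then obtain a b where "a \<noteq> b" "e = {a, b}" by (meson card_2_iff)
    with e have "dominating_edge E {a, b}" by simp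
    then show ?thesis using avm_dominated_bicyclic[OF assms(1-4) \<open>a \<noteq> b\<close>] by simp
  next
    case False
    have "finite E" "E \<noteq> {}" using assms(4) card_gt_0_iff[of E] by simp_all
    moreover have "{} \<notin> E" using assms(1) unfolding simple_graph_def by auto
    ultimately have E: "finite E" "{} \<notin> E" "E \<noteq> {}" by blast+
    have "2 \<le> avm E"
    proof (rule avm_lower_bound[OF E(1)])
      fix M assume "maximal_matching E M"
      then show "2 \<le> real (card M)" using card_maximal_matching_ge_2[OF E False] by simp
    qed
    moreover have "avm (theta_E n) < 2" using avm_theta_E[OF \<open>4 \<le> n\<close>] \<open>4 \<le> n\<close> by simp
    ultimately show ?thesis by simp
  qed
  then show ?thesis using iso_avm by blast
qed

end
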